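(* Algorithm 1 is monotonic. Moreover, for a connected graph $G$ with $n\ge2$ nodes, diameter $D$, nonnegative real loads with initial discrepancy $K>0$, and any $\epsilon>0$, after at most $(2nD+1)\ln(\lceil 2nK^2/\epsilon^2\rceil)$ rounds (hence $O(nD\log(nK/\epsilon))$ time, each round taking a constant number of communication steps; the paper states the bound $(6n+3)D\ln(\lceil nK^2/(\epsilon^2/2)\rceil)$ time units) the discrepancy of $G$ is at most $\epsilon$, and it remains at most $\epsilon$ thereafter.
   Context: $G=(V,E)$ is an undirected connected graph, $n=|V|$, $D$ its diameter; each node $u$ holds a load $load(u)\ge 0$ (real). $L_{max},L_{min}$ denote the current maximum and minimum load and the discrepancy is $K=L_{max}-L_{min}$. Algorithm 1 (single proposal, continuous) proceeds in synchronous rounds; in each round, using the loads at the start of the round: (1) every node $u$ having at least one neighbor with strictly smaller load picks a neighbor $v$ maximizing $load(u)-load(v)$ (ties broken arbitrarily) and sends $v$ a proposal of value $p_{uv}=(load(u)-load(v))/2$; (2) every node that received at least one proposal accepts exactly one proposal of maximum value (ties arbitrary); (3) all accepted transfers are executed simultaneously (each accepted proposal $p_{wu}$ moves $p_{wu}$ from $w$ to $u$), and nodes report their new loads to neighbors. An algorithm is monotonic if in every execution (a) each load transfer goes from a higher-loaded node to a less-loaded one, and (b) the maximum load never increases and the minimum load never decreases. *)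

theory Defs
  imports Complex_Main
begin

definition ugraph :: "'a set \<Rightarrow> ('a \<Rightarrow> 'a \<Rightarrow> bool) \<Rightarrow> bool" where
  "ugraph V E \<longleftrightarrow> finite V \<and> V \<noteq> {} \<and>
     (\<forall>u v. E u v \<longrightarrow> u \<in> V \<and> v \<in> V) \<and>
     (\<forall>u v. E u v \<longrightarrow> E v u) \<and> (\<forall>u. \<not> E u u)"

definition connected_graph :: "'a set \<Rightarrow> ('a \<Rightarrow> 'a \<Rightarrow> bool) \<Rightarrow> bool" where
  "connected_graph V E \<longleftrightarrow> (\<forall>u\<in>V. \<forall>v\<in>V. (u, v) \<in> {(x, y). E x y}\<^sup>*)"

definition walk :: "('a \<Rightarrow> 'a \<Rightarrow> bool) \<Rightarrow> 'a list \<Rightarrow> 'a \<Rightarrow> 'a \<Rightarrow> nat \<Rightarrow> bool" where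
  "walk E xs u v k \<longleftrightarrow> length xs = Suc k \<and> hd xs = u \<and> last xs = v \<and>
     (\<forall>i<k. E (xs ! i) (xs ! Suc i))"

definition gdist :: "('a \<Rightarrow> 'a \<Rightarrow> bool) \<Rightarrow> 'a \<Rightarrow> 'a \<Rightarrow> nat" where
  "gdist E u v = (LEAST k. \<exists>xs. walk E xs u v k)"

definition diameter :: "'a set \<Rightarrow> ('a \<Rightarrow> 'a \<Rightarrow> bool) \<Rightarrow> nat" where
  "diameter V E = Max {gdist E u v | u v. u \<in> V \<and> v \<in> V}"

definition Lmax :: "'a set \<Rightarrow> ('a \<Rightarrow> real) \<Rightarrow> real" where
  "Lmax V l = Max (l ` V)"

definition Lmin :: "'a set \<Rightarrow> ('a \<Rightarrow> real) \<Rightarrow> real" where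
  "Lmin V l = Min (l ` V)"

definition discrepancy :: "'a set \<Rightarrow> ('a \<Rightarrow> real) \<Rightarrow> real" where
  "discrepancy V l = Lmax V l - Lmin V l"

text \<open>From loads l, with the
  set T of accepted proposals (pairs (w,u): w's proposal to u accepted; amount
  (l w - l u)/2), the new loads are l'.  The choice functions prop / acc encode
  the arbitrary tie-breaking.\<close>
definition alg1_round ::
  "'a set \<Rightarrow> ('a \<Rightarrow> 'a \<Rightarrow> bool) \<Rightarrow> ('a \<Rightarrow> real) \<Rightarrow> ('a \<times> 'a) set \<Rightarrow> ('a \<Rightarrow> real) \<Rightarrow> bool" where
  "alg1_round V E l T l' \<longleftrightarrow>
    (\<exists>prop acc :: 'a \<Rightarrow> 'a option.
      (\<forall>u\<in>V. if (\<exists>v. E u v \<and> l v < l u)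
               then (\<exists>v. prop u = Some v \<and> E u v \<and> (\<forall>w. E u w \<longrightarrow> l u - l w \<le> l u - l v))
               else prop u = None) \<and>
      (\<forall>u\<in>V. if (\<exists>w\<in>V. prop w = Some u)
               then (\<exists>w\<in>V. acc u = Some w \<and> prop w = Some u \<and>
                       (\<forall>w'\<in>V. prop w' = Some u \<longrightarrow> (l w' - l u) / 2 \<le> (l w - l u) / 2))
               else acc u = None) \<and>
      T = {(w, u). w \<in> V \<and> u \<in> V \<and> acc u = Some w} \<and>
      (\<forall>u\<in>V. l' u = l u + (\<Sum>(w, v) \<in> T \<inter> (V \<times> {u}). (l w - l v) / 2)
                         - (\<Sum>(w, v) \<in> T \<inter> ({u} \<times> V). (l w - l v) / 2)) \<and>
      (\<forall>u. u \<notin> V \<longrightarrow> l' u = l u))"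

definition alg1_execution ::
  "'a set \<Rightarrow> ('a \<Rightarrow> 'a \<Rightarrow> bool) \<Rightarrow> (nat \<Rightarrow> 'a \<Rightarrow> real) \<Rightarrow> (nat \<Rightarrow> ('a \<times> 'a) set) \<Rightarrow> bool" where
  "alg1_execution V E ls Ts \<longleftrightarrow> (\<forall>t. alg1_round V E (ls t) (Ts t) (ls (Suc t)))"

definition alg1_monotonic :: "'a set \<Rightarrow> ('a \<Rightarrow> 'a \<Rightarrow> bool) \<Rightarrow> bool" where
  "alg1_monotonic V E \<longleftrightarrow>
    (\<forall>ls Ts. alg1_execution V E ls Ts \<longrightarrow>
       (\<forall>t. \<forall>(w, u) \<in> Ts t. ls t u < ls t w) \<and>
       (\<forall>t. Lmax V (ls (Suc t)) \<le> Lmax V (ls t) \<and> Lmin V (ls t) \<le> Lmin V (ls (Suc t))))"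

end

theory Submission
  imports Defs "HOL-Analysis.Convex"
begin

text \<open>Every accepted transfer moves half of a load difference downhill, and every node sends
  and receives at most one transfer per round; hence loads stay between the current minimum and
  maximum, the total load is invariant, and the potential \<open>\<Phi> = \<Sum>u. (l u - \<mu>)\<^sup>2\<close> around the
  mean \<open>\<mu>\<close> drops by at least \<open>2 S\<close>, where \<open>S\<close> is the sum of the squared transferred amounts.
  Along a shortest path from a maximum to a minimum node every downhill edge is dominated by a
  transfer into a neighbour of its tail (the tail proposed to its steepest neighbour, which
  accepted a proposal at least as steep), and a shortest path contains at most three
  neighbours of any node; with Cauchy-Schwarz this gives \<open>K\<^sup>2 \<le> 12 D S\<close>. Together with
  \<open>\<Phi> \<le> n K\<^sup>2 / 4\<close> the potential contracts by the factor \<open>1 - 1 / (2 n D + 1)\<close> per round,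
  and \<open>K\<^sup>2 \<le> 2 \<Phi>\<close> turns this into the stated bound.\<close>

section \<open>Sums and elementary inequalities\<close>

lemma sum_fibres:
  assumes "finite A" "finite B" "f ` A \<subseteq> B"
  shows "(\<Sum>y\<in>B. \<Sum>x\<in>{x\<in>A. f x = y}. g y x) = (\<Sum>x\<in>A. g (f x) x)"
proof -
  have "(\<Sum>y\<in>B. \<Sum>x\<in>{x\<in>A. f x = y}. g y x) = (\<Sum>y\<in>B. \<Sum>x\<in>{x\<in>A. f x = y}. g (f x) x)"
    by (intro sum.cong) auto
  also have "\<dots> = (\<Sum>x\<in>A. g (f x) x)"
    using sum.group[OF assms, of "\<lambda>x. g (f x) x"] by simp
  finally show ?thesis .
qed

lemma power2_sum_subsingleton:
  fixes g :: "'a \<Rightarrow> real"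
  assumes "\<And>x y. x \<in> S \<Longrightarrow> y \<in> S \<Longrightarrow> x = y"
  shows "(sum g S)\<^sup>2 = (\<Sum>x\<in>S. (g x)\<^sup>2)"
proof (cases "S = {}")
  case False
  then obtain a where "a \<in> S" by blast
  with assms have "S = {a}" by blast
  then show ?thesis by simp
qed simp

lemma sum_charged_le:
  fixes f :: "'b \<Rightarrow> real" and m :: nat
  assumes "finite T" "\<And>p. p \<in> T \<Longrightarrow> 0 \<le> f p"
    and "\<And>p. p \<in> T \<Longrightarrow> card {i. i < m \<and> P i p} \<le> c"
  shows "(\<Sum>i<m. \<Sum>p\<in>{p\<in>T. P i p}. f p) \<le> real c * (\<Sum>p\<in>T. f p)"
proof -
  have "(\<Sum>i<m. \<Sum>p\<in>{p\<in>T. P i p}. f p) = (\<Sum>p\<in>T. \<Sum>i<m. if P i p then f p else 0)"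
    using assms(1) by (simp add: sum.inter_filter sum.swap[of _ T])
  also have "\<dots> = (\<Sum>p\<in>T. real (card {i. i < m \<and> P i p}) * f p)"
  proof (intro sum.cong refl)
    fix p
    have "(\<Sum>i<m. if P i p then f p else 0) = (\<Sum>i\<in>{i\<in>{..<m}. P i p}. f p)"
      by (rule sum.inter_filter[symmetric]) simp
    then show "(\<Sum>i<m. if P i p then f p else 0) = real (card {i. i < m \<and> P i p}) * f p"
      by simp
  qed
  also have "\<dots> \<le> (\<Sum>p\<in>T. real c * f p)"
    using assms(2,3) by (intro sum_mono mult_right_mono) auto
  finally show ?thesis by (simp add: sum_distrib_left)
qed

lemma card_le_3_if_spread_le_2:
  fixes S :: "nat set"
  assumes "finite S" "\<And>i j. i \<in> S \<Longrightarrow> j \<in> S \<Longrightarrow> i < j \<Longrightarrow> j \<le> i + 2"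
  shows "card S \<le> 3"
proof (cases "S = {}")
  case False
  have "S \<subseteq> {Min S..Min S + 2}"
  proof
    fix x assume "x \<in> S"
    then have "Min S \<le> x" using assms(1) by simp
    then show "x \<in> {Min S..Min S + 2}"
      using assms(2)[OF Min_in[OF assms(1) False] \<open>x \<in> S\<close>] by (cases "Min S = x") auto
  qed
  then have "card S \<le> card {Min S..Min S + 2}" by (intro card_mono) auto
  then show ?thesis by simp
qed simp

lemma sum_sq_dev_mean_le:
  fixes x :: "'a \<Rightarrow> real"
  assumes "finite V" "(\<Sum>u\<in>V. x u) = real (card V) * \<mu>"
  shows "(\<Sum>u\<in>V. (x u - \<mu>)\<^sup>2) \<le> (\<Sum>u\<in>V. (x u - c)\<^sup>2)"
proof -
  have "(\<Sum>u\<in>V. (x u - c)\<^sup>2) = (\<Sum>u\<in>V. (x u - \<mu>)\<^sup>2 + 2 * (\<mu> - c) * (x u - \<mu>) + (\<mu> - c)\<^sup>2)"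
    by (intro sum.cong refl) (simp add: power2_eq_square algebra_simps)
  also have "\<dots> = (\<Sum>u\<in>V. (x u - \<mu>)\<^sup>2) + 2 * (\<mu> - c) * (\<Sum>u\<in>V. x u - \<mu>) + real (card V) * (\<mu> - c)\<^sup>2"
    by (simp add: sum.distrib sum_distrib_left)
  also have "(\<Sum>u\<in>V. x u - \<mu>) = 0" using assms(2) by (simp add: sum_subtractf)
  finally show ?thesis by simp
qed

lemma potential_contraction:
  fixes \<Phi> \<Phi>' S K n D :: real
  assumes "\<Phi>' \<le> \<Phi> - 2 * S" "K\<^sup>2 \<le> 12 * D * S" "\<Phi> \<le> n * K\<^sup>2 / 4" "0 \<le> S" "0 \<le> n" "0 \<le> D"
  shows "\<Phi>' \<le> (1 - 1 / (2 * n * D + 1)) * \<Phi>"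
proof -
  have nD: "0 \<le> n * D" using assms(5,6) by simp
  then have pos: "0 < 2 * n * D + 1" by simp
  have "n * K\<^sup>2 / 4 \<le> n * (12 * D * S) / 4"
    by (rule divide_right_mono[OF mult_left_mono[OF assms(2,5)]]) simp
  with assms(3) have "\<Phi> \<le> n * (12 * D * S) / 4" by linarith
  also have "\<dots> \<le> 2 * S * (2 * n * D + 1)"
    using assms(4) mult_nonneg_nonneg[OF nD assms(4)] by (simp add: algebra_simps)
  finally have "\<Phi> / (2 * n * D + 1) \<le> 2 * S" by (simp add: pos_divide_le_eq[OF pos])
  with assms(1) show ?thesis by (simp add: algebra_simps)
qed

lemma geometric_decay_le:
  fixes r Y :: real
  assumes "0 < r" "r \<le> 1" "0 < Y" "ln (real_of_int \<lceil>Y\<rceil>) \<le> r * real t"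
  shows "(1 - r) ^ t \<le> 1 / Y"
proof -
  have "(1 - r) ^ t \<le> exp (- r) ^ t"
    using assms(2) exp_ge_add_one_self[of "- r"] by (intro power_mono) auto
  also have "\<dots> = exp (- (r * real t))" by (simp add: exp_of_nat_mult[symmetric] mult.commute)
  also have "\<dots> \<le> exp (- ln (real_of_int \<lceil>Y\<rceil>))" using assms(4) by simp
  also have "\<dots> = 1 / real_of_int \<lceil>Y\<rceil>" using assms(3) by (simp add: exp_minus')
  also have "\<dots> \<le> 1 / Y" using assms(3) by (simp add: frac_le)
  finally show ?thesis .
qed

section \<open>Loads and their spread\<close>

lemma Lmax_ge: "finite V \<Longrightarrow> u \<in> V \<Longrightarrow> l u \<le> Lmax V l"
  unfolding Lmax_def by simp

lemma Lmin_le: "finite V \<Longrightarrow> u \<in> V \<Longrightarrow> Lmin V l \<le> l u"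
  unfolding Lmin_def by simp

lemma Lmax_attained:
  assumes "finite V" "V \<noteq> {}" shows "\<exists>a\<in>V. l a = Lmax V l"
proof -
  have "Max (l ` V) \<in> l ` V" using assms by simp
  then show ?thesis unfolding Lmax_def by (metis imageE)
qed

lemma Lmin_attained:
  assumes "finite V" "V \<noteq> {}" shows "\<exists>b\<in>V. l b = Lmin V l"
proof -
  have "Min (l ` V) \<in> l ` V" using assms by simp
  then show ?thesis unfolding Lmin_def by (metis imageE)
qed

lemma sum_sq_dev_mean_le_discrepancy:
  fixes l :: "'a \<Rightarrow> real"
  assumes "finite V" "(\<Sum>u\<in>V. l u) = real (card V) * \<mu>"
  shows "(\<Sum>u\<in>V. (l u - \<mu>)\<^sup>2) \<le> real (card V) * (discrepancy V l)\<^sup>2 / 4"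
proof -
  let ?c = "(Lmax V l + Lmin V l) / 2"
  have "(\<Sum>u\<in>V. (l u - \<mu>)\<^sup>2) \<le> (\<Sum>u\<in>V. (l u - ?c)\<^sup>2)" by (rule sum_sq_dev_mean_le[OF assms])
  also have "\<dots> \<le> (\<Sum>u\<in>V. (discrepancy V l / 2)\<^sup>2)"
  proof (intro sum_mono)
    fix u assume "u \<in> V"
    then have "Lmin V l \<le> l u" "l u \<le> Lmax V l"
      using Lmin_le[OF assms(1)] Lmax_ge[OF assms(1)] by blast+
    then have "\<bar>l u - ?c\<bar> \<le> \<bar>discrepancy V l / 2\<bar>"
      unfolding discrepancy_def by (auto simp: abs_if field_simps)
    then show "(l u - ?c)\<^sup>2 \<le> (discrepancy V l / 2)\<^sup>2" using abs_le_square_iff by blast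
  qed
  also have "\<dots> = real (card V) * (discrepancy V l)\<^sup>2 / 4" by (simp add: power_divide)
  finally show ?thesis .
qed

lemma discrepancy_sq_le_sum_sq_dev:
  fixes l :: "'a \<Rightarrow> real"
  assumes "finite V" "V \<noteq> {}"
  shows "(discrepancy V l)\<^sup>2 \<le> 2 * (\<Sum>u\<in>V. (l u - c)\<^sup>2)"
proof -
  obtain a b where a: "a \<in> V" "l a = Lmax V l" and b: "b \<in> V" "l b = Lmin V l"
    using Lmax_attained[OF assms] Lmin_attained[OF assms] by blast
  show ?thesis
  proof (cases "a = b")
    case True
    then show ?thesis using a b by (simp add: discrepancy_def sum_nonneg)
  next
    case False
    have "(l a - l b)\<^sup>2 \<le> 2 * ((l a - c)\<^sup>2 + (l b - c)\<^sup>2)"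
      using zero_le_power2[of "l a - c + (l b - c)"] by (simp add: power2_eq_square algebra_simps)
    also have "(l a - c)\<^sup>2 + (l b - c)\<^sup>2 \<le> (\<Sum>u\<in>V. (l u - c)\<^sup>2)"
      using sum_mono2[OF assms(1), of "{a, b}" "\<lambda>u. (l u - c)\<^sup>2"] a b False by simp
    finally show ?thesis using a b by (simp add: discrepancy_def)
  qed
qed

section \<open>Walks and shortest paths\<close>

lemma walk_snoc:
  assumes "walk E xs a b k" "E b c"
  shows "walk E (xs @ [c]) a c (Suc k)"
proof -
  have len: "length xs = Suc k" and "hd xs = a" and last: "last xs = b"
    and edges: "\<forall>i<k. E (xs ! i) (xs ! Suc i)"
    using assms(1) unfolding walk_def by auto
  have "xs ! k = b" using len last by (metis diff_Suc_1 last_conv_nth list.size(3) nat.distinct(1))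
  then have "E ((xs @ [c]) ! i) ((xs @ [c]) ! Suc i)" if "i < Suc k" for i
    using that edges assms(2) len by (auto simp: nth_append less_Suc_eq)
  then show ?thesis
    using len \<open>hd xs = a\<close> unfolding walk_def by (cases xs) auto
qed

lemma rtrancl_imp_walk:
  assumes "(a, b) \<in> {(x, y). E x y}\<^sup>*"
  shows "\<exists>xs k. walk E xs a b k"
  using assms
proof (induction rule: rtrancl_induct)
  case base
  have "walk E [a] a a 0" unfolding walk_def by simp
  then show ?case by blast
next
  case (step y z)
  then show ?case using walk_snoc by fastforce
qed

lemma gdist_le_walk: "walk E xs a b k \<Longrightarrow> gdist E a b \<le> k"
  unfolding gdist_def by (blast intro: Least_le)

lemma walk_gdist: "walk E xs a b k \<Longrightarrow> \<exists>ys. walk E ys a b (gdist E a b)"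
  unfolding gdist_def by (rule LeastI_ex) blast

lemma gdist_le_diameter:
  assumes "finite V" "a \<in> V" "b \<in> V"
  shows "gdist E a b \<le> diameter V E"
proof -
  have "{gdist E u v | u v. u \<in> V \<and> v \<in> V} = (\<lambda>(u, v). gdist E u v) ` (V \<times> V)" by auto
  then have "finite {gdist E u v | u v. u \<in> V \<and> v \<in> V}" using assms(1) by simp
  then show ?thesis unfolding diameter_def using assms by (intro Max_ge) blast+
qed

lemma walk_telescope:
  fixes l :: "'a \<Rightarrow> 'b::ab_group_add"
  assumes "walk E xs a b m"
  shows "(\<Sum>i<m. l (xs ! i) - l (xs ! Suc i)) = l a - l b"
proof -
  have "xs \<noteq> []" "length xs = Suc m" "hd xs = a" "last xs = b"
    using assms unfolding walk_def by auto
  then have "xs ! 0 = a" "xs ! m = b" by (simp_all add: hd_conv_nth last_conv_nth)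
  then show ?thesis using sum_lessThan_telescope'[of "\<lambda>i. l (xs ! i)" m] by simp
qed

lemma walk_detour:
  assumes w: "walk E xs a b m" and ij: "i < j" "j \<le> m"
    and "E (xs ! i) v" "E v (xs ! j)"
  shows "walk E (take (Suc i) xs @ v # drop j xs) a b (m + i + 2 - j)"
proof -
  let ?ys = "take (Suc i) xs @ v # drop j xs"
  have len: "length xs = Suc m" and "hd xs = a" and "last xs = b"
    and edges: "\<forall>k<m. E (xs ! k) (xs ! Suc k)" using w unfolding walk_def by auto
  have "E (?ys ! k) (?ys ! Suc k)" if k: "k < m + i + 2 - j" for k
  proof -
    consider "k < i" | "k = i" | "k = Suc i" | "Suc i < k" by linarith
    then show ?thesis
    proof cases
      case 4
      then have "Suc (j + k - Suc (Suc i)) = j + k - Suc i" by linarith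
      with 4 have "?ys ! k = xs ! (j + k - Suc (Suc i))"
          "?ys ! Suc k = xs ! Suc (j + k - Suc (Suc i))"
        using len ij by (simp_all add: nth_append min_def nth_Cons')
      moreover have "j + k - Suc (Suc i) < m" using k 4 ij by linarith
      ultimately show ?thesis using edges by simp
    qed (use len ij edges assms(4,5) in \<open>simp_all add: nth_append min_def\<close>)
  qed
  moreover have "length ?ys = Suc (m + i + 2 - j)" using len ij by simp
  moreover have "hd ?ys = a" using \<open>hd xs = a\<close> len by (cases xs) auto
  moreover have "last ?ys = b" using \<open>last xs = b\<close> len ij by (simp add: last_drop)
  ultimately show ?thesis unfolding walk_def by blast
qed

lemma shortest_walk_common_neighbour:
  assumes w: "walk E xs a b (gdist E a b)" and sym: "\<And>x y. E x y \<Longrightarrow> E y x"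
    and ij: "i < j" "j \<le> gdist E a b" and "E (xs ! i) v" "E (xs ! j) v"
  shows "j \<le> i + 2"
proof (rule ccontr)
  assume "\<not> j \<le> i + 2"
  have "walk E (take (Suc i) xs @ v # drop j xs) a b (gdist E a b + i + 2 - j)"
    using walk_detour[OF w ij] assms(5,6) sym by blast
  then have "gdist E a b \<le> gdist E a b + i + 2 - j" by (rule gdist_le_walk)
  with \<open>\<not> j \<le> i + 2\<close> ij show False by linarith
qed

lemma shortest_walk_card_neighbours:
  assumes "walk E xs a b (gdist E a b)" "\<And>x y. E x y \<Longrightarrow> E y x"
  shows "card {i. i < gdist E a b \<and> E (xs ! i) v} \<le> 3"
  by (rule card_le_3_if_spread_le_2) (use shortest_walk_common_neighbour[OF assms] in auto)

section \<open>One round of Algorithm 1\<close>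

definition transfer_amount :: "('a \<Rightarrow> real) \<Rightarrow> 'a \<times> 'a \<Rightarrow> real" where
  "transfer_amount l p = (l (fst p) - l (snd p)) / 2"

definition inflow :: "('a \<Rightarrow> real) \<Rightarrow> ('a \<times> 'a) set \<Rightarrow> 'a \<Rightarrow> real" where
  "inflow l T u = (\<Sum>p\<in>{p\<in>T. snd p = u}. transfer_amount l p)"

definition outflow :: "('a \<Rightarrow> real) \<Rightarrow> ('a \<times> 'a) set \<Rightarrow> 'a \<Rightarrow> real" where
  "outflow l T u = (\<Sum>p\<in>{p\<in>T. fst p = u}. transfer_amount l p)"

locale balancing_step =
  fixes V :: "'a set" and l l' :: "'a \<Rightarrow> real" and T :: "('a \<times> 'a) set"
  assumes finite_V: "finite V"
    and transfers_subset: "T \<subseteq> V \<times> V"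
    and transfer_downhill: "(w, u) \<in> T \<Longrightarrow> l u < l w"
    and unique_sender: "(w, u) \<in> T \<Longrightarrow> (w', u) \<in> T \<Longrightarrow> w = w'"
    and unique_receiver: "(u, v) \<in> T \<Longrightarrow> (u, v') \<in> T \<Longrightarrow> v = v'"
    and load_update: "u \<in> V \<Longrightarrow> l' u = l u + inflow l T u - outflow l T u"
begin

lemma finite_T: "finite T"
  using finite_V transfers_subset by (meson finite_SigmaI finite_subset)

lemma transfer_amount_pos: "p \<in> T \<Longrightarrow> 0 < transfer_amount l p"
  unfolding transfer_amount_def by (cases p) (auto dest: transfer_downhill)

lemma inflow_nonneg: "0 \<le> inflow l T u"
  unfolding inflow_def by (intro sum_nonneg) (auto dest: transfer_amount_pos)

lemma outflow_nonneg: "0 \<le> outflow l T u"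
  unfolding outflow_def by (intro sum_nonneg) (auto dest: transfer_amount_pos)

lemma inflow_le:
  assumes "u \<in> V" shows "inflow l T u \<le> (Lmax V l - l u) / 2"
proof (cases "{p\<in>T. snd p = u} = {}")
  case False
  then obtain w where w: "(w, u) \<in> T" by auto
  then have "{p\<in>T. snd p = u} = {(w, u)}" using unique_sender by auto
  moreover have "w \<in> V" using w transfers_subset by auto
  ultimately show ?thesis
    unfolding inflow_def transfer_amount_def by (simp add: Lmax_ge[OF finite_V])
next
  case True
  then show ?thesis
    unfolding inflow_def using Lmax_ge[OF finite_V assms] by (simp only: sum.empty) simp
qed

lemma outflow_le:
  assumes "u \<in> V" shows "outflow l T u \<le> (l u - Lmin V l) / 2"
proof (cases "{p\<in>T. fst p = u} = {}")
  case False
  then obtain v where v: "(u, v) \<in> T" by auto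
  then have "{p\<in>T. fst p = u} = {(u, v)}" using unique_receiver by auto
  moreover have "v \<in> V" using v transfers_subset by auto
  ultimately show ?thesis
    unfolding outflow_def transfer_amount_def by (simp add: Lmin_le[OF finite_V])
next
  case True
  then show ?thesis
    unfolding outflow_def using Lmin_le[OF finite_V assms] by (simp only: sum.empty) simp
qed

lemma Lmax_step_le:
  assumes "V \<noteq> {}" shows "Lmax V l' \<le> Lmax V l"
proof -
  have "l' u \<le> Lmax V l" if "u \<in> V" for u
    using load_update[OF that] inflow_le[OF that] outflow_nonneg[of u]
      Lmax_ge[OF finite_V that, where l = l] by simp
  then show ?thesis unfolding Lmax_def[of V l'] using finite_V assms by simp
qed

lemma Lmin_step_ge:
  assumes "V \<noteq> {}" shows "Lmin V l \<le> Lmin V l'"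
proof -
  have "Lmin V l \<le> l' u" if "u \<in> V" for u
    using load_update[OF that] outflow_le[OF that] inflow_nonneg[of u]
      Lmin_le[OF finite_V that, where l = l] by simp
  then show ?thesis unfolding Lmin_def[of V l'] using finite_V assms by simp
qed

lemma weighted_sum_inflow:
  "(\<Sum>u\<in>V. h u * inflow l T u) = (\<Sum>p\<in>T. h (snd p) * transfer_amount l p)"
  unfolding inflow_def sum_distrib_left
  by (rule sum_fibres[OF finite_T finite_V]) (use transfers_subset in auto)

lemma weighted_sum_outflow:
  "(\<Sum>u\<in>V. h u * outflow l T u) = (\<Sum>p\<in>T. h (fst p) * transfer_amount l p)"
  unfolding outflow_def sum_distrib_left
  by (rule sum_fibres[OF finite_T finite_V]) (use transfers_subset in auto)

lemma sum_inflow_squared: "(\<Sum>u\<in>V. (inflow l T u)\<^sup>2) = (\<Sum>p\<in>T. (transfer_amount l p)\<^sup>2)"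
proof -
  have "(inflow l T u)\<^sup>2 = (\<Sum>p\<in>{p\<in>T. snd p = u}. (transfer_amount l p)\<^sup>2)" for u
    unfolding inflow_def by (rule power2_sum_subsingleton) (auto dest: unique_sender)
  moreover have "snd ` T \<subseteq> V" using transfers_subset by auto
  ultimately show ?thesis by (simp add: sum_fibres[OF finite_T finite_V])
qed

lemma sum_outflow_squared: "(\<Sum>u\<in>V. (outflow l T u)\<^sup>2) = (\<Sum>p\<in>T. (transfer_amount l p)\<^sup>2)"
proof -
  have "(outflow l T u)\<^sup>2 = (\<Sum>p\<in>{p\<in>T. fst p = u}. (transfer_amount l p)\<^sup>2)" for u
    unfolding outflow_def by (rule power2_sum_subsingleton) (auto dest: unique_receiver)
  moreover have "fst ` T \<subseteq> V" using transfers_subset by auto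
  ultimately show ?thesis by (simp add: sum_fibres[OF finite_T finite_V])
qed

lemma sum_loads_step: "(\<Sum>u\<in>V. l' u) = (\<Sum>u\<in>V. l u)"
proof -
  have "(\<Sum>u\<in>V. l' u) = (\<Sum>u\<in>V. l u) + (\<Sum>u\<in>V. 1 * inflow l T u) - (\<Sum>u\<in>V. 1 * outflow l T u)"
    by (simp add: load_update sum.distrib sum_subtractf)
  then show ?thesis by (simp only: weighted_sum_inflow weighted_sum_outflow)
qed

lemma sum_sq_dev_step_le:
  "(\<Sum>u\<in>V. (l' u - c)\<^sup>2) \<le> (\<Sum>u\<in>V. (l u - c)\<^sup>2) - 2 * (\<Sum>p\<in>T. (transfer_amount l p)\<^sup>2)"
proof -
  let ?a = "transfer_amount l"
  have cross: "(\<Sum>p\<in>T. 2 * (l (snd p) - c) * ?a p) - (\<Sum>p\<in>T. 2 * (l (fst p) - c) * ?a p)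
      = - 4 * (\<Sum>p\<in>T. (?a p)\<^sup>2)"
    unfolding sum_subtractf[symmetric] sum_distrib_left
    by (intro sum.cong) (simp_all add: transfer_amount_def power2_eq_square field_simps)
  have "(\<Sum>u\<in>V. (l' u - c)\<^sup>2) \<le> (\<Sum>u\<in>V. (l u - c)\<^sup>2 + 2 * (l u - c) * inflow l T u
      - 2 * (l u - c) * outflow l T u + ((inflow l T u)\<^sup>2 + (outflow l T u)\<^sup>2))"
  proof (intro sum_mono)
    fix u assume "u \<in> V"
    have "(inflow l T u - outflow l T u)\<^sup>2 \<le> (inflow l T u)\<^sup>2 + (outflow l T u)\<^sup>2"
      using inflow_nonneg[of u] outflow_nonneg[of u] by (simp add: power2_eq_square algebra_simps)
    then show "(l' u - c)\<^sup>2 \<le> (l u - c)\<^sup>2 + 2 * (l u - c) * inflow l T u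
      - 2 * (l u - c) * outflow l T u + ((inflow l T u)\<^sup>2 + (outflow l T u)\<^sup>2)"
      by (simp add: load_update[OF \<open>u \<in> V\<close>] power2_eq_square algebra_simps)
  qed
  also have "\<dots> = (\<Sum>u\<in>V. (l u - c)\<^sup>2) + (\<Sum>p\<in>T. 2 * (l (snd p) - c) * ?a p)
      - (\<Sum>p\<in>T. 2 * (l (fst p) - c) * ?a p) + 2 * (\<Sum>p\<in>T. (?a p)\<^sup>2)"
    by (simp add: sum.distrib sum_subtractf weighted_sum_inflow weighted_sum_outflow
        sum_inflow_squared sum_outflow_squared)
  finally show ?thesis using cross by simp
qed

end

definition transfers_dominate ::
    "'a set \<Rightarrow> ('a \<Rightarrow> 'a \<Rightarrow> bool) \<Rightarrow> ('a \<Rightarrow> real) \<Rightarrow> ('a \<times> 'a) set \<Rightarrow> bool" where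
  "transfers_dominate V E l T \<longleftrightarrow>
     (\<forall>u\<in>V. \<forall>x. E u x \<and> l x < l u \<longrightarrow> (\<exists>(w, v)\<in>T. E u v \<and> l u - l x \<le> l w - l v))"

lemma alg1_round_properties:
  assumes G: "ugraph V E" and round: "alg1_round V E l T l'"
  shows "balancing_step V l l' T" and "transfers_dominate V E l T"
proof -
  from round obtain proposal accept :: "'a \<Rightarrow> 'a option" where
    proposals: "\<forall>u\<in>V. if (\<exists>v. E u v \<and> l v < l u)
               then (\<exists>v. proposal u = Some v \<and> E u v \<and> (\<forall>w. E u w \<longrightarrow> l u - l w \<le> l u - l v))
               else proposal u = None" and
    acceptance: "\<forall>u\<in>V. if (\<exists>w\<in>V. proposal w = Some u)
               then (\<exists>w\<in>V. accept u = Some w \<and> proposal w = Some u \<and>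
                       (\<forall>w'\<in>V. proposal w' = Some u \<longrightarrow> (l w' - l u) / 2 \<le> (l w - l u) / 2))
               else accept u = None" and
    T: "T = {(w, u). w \<in> V \<and> u \<in> V \<and> accept u = Some w}" and
    update: "\<forall>u\<in>V. l' u = l u + (\<Sum>(w, v) \<in> T \<inter> (V \<times> {u}). (l w - l v) / 2)
                         - (\<Sum>(w, v) \<in> T \<inter> ({u} \<times> V). (l w - l v) / 2)"
    unfolding alg1_round_def by blast
  have steepest_downhill: "E u v \<and> l v < l u \<and> (\<forall>x. E u x \<longrightarrow> l v \<le> l x)"
    if u: "u \<in> V" and v: "proposal u = Some v" for u v
  proof -
    have "\<exists>x. E u x \<and> l x < l u"
      using bspec[OF proposals u] v unfolding if_bool_eq_conj by auto
    moreover from this obtain v' where "proposal u = Some v'" "E u v'" "\<forall>x. E u x \<longrightarrow> l v' \<le> l x"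
      using bspec[OF proposals u] unfolding if_bool_eq_conj by auto
    ultimately show ?thesis using v by force
  qed
  have accepted: "proposal w = Some u" if "(w, u) \<in> T" for w u
  proof -
    from that T have u: "u \<in> V" and "accept u = Some w" by auto
    then show ?thesis using bspec[OF acceptance u] unfolding if_bool_eq_conj by auto
  qed
  have TV: "T \<subseteq> V \<times> V" using T by auto
  show "balancing_step V l l' T"
  proof
    show "finite V" using G unfolding ugraph_def by blast
    show "T \<subseteq> V \<times> V" by (rule TV)
    show "l u < l w" if "(w, u) \<in> T" for w u
      using steepest_downhill[OF _ accepted[OF that]] that TV by blast
    show "w = w'" if "(w, u) \<in> T" "(w', u) \<in> T" for w w' u
      using that unfolding T by auto
    show "v = v'" if "(u, v) \<in> T" "(u, v') \<in> T" for u v v'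
      using accepted[OF that(1)] accepted[OF that(2)] by simp
    fix u assume u: "u \<in> V"
    then have "T \<inter> (V \<times> {u}) = {p\<in>T. snd p = u}" "T \<inter> ({u} \<times> V) = {p\<in>T. fst p = u}"
      using TV by auto
    then show "l' u = l u + inflow l T u - outflow l T u"
      using bspec[OF update u]
      by (simp add: inflow_def outflow_def transfer_amount_def case_prod_beta)
  qed
  show "transfers_dominate V E l T"
    unfolding transfers_dominate_def
  proof (intro ballI allI impI)
    fix u x assume u: "u \<in> V" and x: "E u x \<and> l x < l u"
    then obtain v where v: "proposal u = Some v"
      using bspec[OF proposals u] unfolding if_bool_eq_conj by auto
    with x steepest_downhill[OF u v] have "E u v" "l v \<le> l x" by auto
    then have "v \<in> V" using G unfolding ugraph_def by blast
    moreover have "\<exists>w\<in>V. proposal w = Some v" using u v by blast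
    ultimately obtain w where w: "w \<in> V" "accept v = Some w"
        "\<forall>w'\<in>V. proposal w' = Some v \<longrightarrow> (l w' - l v) / 2 \<le> (l w - l v) / 2"
      using bspec[OF acceptance \<open>v \<in> V\<close>] unfolding if_bool_eq_conj by auto
    have "(w, v) \<in> T" using T w \<open>v \<in> V\<close> by simp
    moreover have "l u - l x \<le> l w - l v" using bspec[OF w(3) u] v \<open>l v \<le> l x\<close> by simp
    ultimately show "\<exists>(w, v)\<in>T. E u v \<and> l u - l x \<le> l w - l v" using \<open>E u v\<close> by blast
  qed
qed

lemma shortest_walk_charge:
  assumes G: "ugraph V E" and w: "walk E xs a b (gdist E a b)"
    and finT: "finite T" and dom: "transfers_dominate V E l T"
  shows "(\<Sum>i<gdist E a b. (max 0 (l (xs ! i) - l (xs ! Suc i)))\<^sup>2)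
          \<le> 3 * (\<Sum>p\<in>T. (l (fst p) - l (snd p))\<^sup>2)"
proof -
  let ?m = "gdist E a b"
  have sym: "\<And>x y. E x y \<Longrightarrow> E y x" using G unfolding ugraph_def by blast
  let ?charge = "\<lambda>i. \<Sum>p\<in>{p\<in>T. E (xs ! i) (snd p)}. (l (fst p) - l (snd p))\<^sup>2"
  have edge: "E (xs ! i) (xs ! Suc i)" if "i < ?m" for i using w that unfolding walk_def by blast
  have "(max 0 (l (xs ! i) - l (xs ! Suc i)))\<^sup>2 \<le> ?charge i" if i: "i < ?m" for i
  proof (cases "l (xs ! Suc i) < l (xs ! i)")
    case True
    have "xs ! i \<in> V" using G edge[OF i] unfolding ugraph_def by blast
    with True edge[OF i] dom obtain w v where wv: "(w, v) \<in> T" "E (xs ! i) v"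
        "l (xs ! i) - l (xs ! Suc i) \<le> l w - l v"
      unfolding transfers_dominate_def by blast
    have "(max 0 (l (xs ! i) - l (xs ! Suc i)))\<^sup>2 \<le> (l w - l v)\<^sup>2"
      using True wv(3) by (simp add: power_mono)
    also have "\<dots> \<le> ?charge i"
      using wv finT
      by (intro member_le_sum[where f = "\<lambda>p. (l (fst p) - l (snd p))\<^sup>2", of "(w, v)", simplified])
        auto
    finally show ?thesis .
  qed (simp add: sum_nonneg)
  then have "(\<Sum>i<?m. (max 0 (l (xs ! i) - l (xs ! Suc i)))\<^sup>2) \<le> (\<Sum>i<?m. ?charge i)"
    by (intro sum_mono) simp
  also have "\<dots> \<le> real 3 * (\<Sum>p\<in>T. (l (fst p) - l (snd p))\<^sup>2)"
    by (rule sum_charged_le) (use finT shortest_walk_card_neighbours[OF w sym] in auto)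
  finally show ?thesis by simp
qed

lemma discrepancy_sq_le_transfers:
  assumes G: "ugraph V E" and C: "connected_graph V E"
    and step: "balancing_step V l l' T" and dom: "transfers_dominate V E l T"
  shows "(discrepancy V l)\<^sup>2 \<le> 12 * real (diameter V E) * (\<Sum>p\<in>T. (transfer_amount l p)\<^sup>2)"
proof -
  have fin: "finite V" and ne: "V \<noteq> {}" using G unfolding ugraph_def by blast+
  obtain a b where a: "a \<in> V" "l a = Lmax V l" and b: "b \<in> V" "l b = Lmin V l"
    using Lmax_attained[OF fin ne] Lmin_attained[OF fin ne] by blast
  have "(a, b) \<in> {(x, y). E x y}\<^sup>*" using C a(1) b(1) unfolding connected_graph_def by blast
  then obtain xs0 k where "walk E xs0 a b k" by (blast dest: rtrancl_imp_walk)
  then obtain xs where w: "walk E xs a b (gdist E a b)" by (blast dest: walk_gdist)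
  let ?m = "gdist E a b"
  let ?pos = "\<lambda>i. max 0 (l (xs ! i) - l (xs ! Suc i))"
  have K: "discrepancy V l = l a - l b" unfolding discrepancy_def using a b by simp
  have "0 \<le> l a - l b" using Lmax_ge[OF fin b(1), where l = l] a b by simp
  moreover have "l a - l b \<le> (\<Sum>i<?m. ?pos i)"
    unfolding walk_telescope[OF w, symmetric] by (intro sum_mono) simp
  ultimately have "(l a - l b)\<^sup>2 \<le> (\<Sum>i<?m. ?pos i)\<^sup>2" by (intro power_mono) auto
  also have "\<dots> \<le> (\<Sum>i<?m. (?pos i)\<^sup>2) * real ?m"
    using sum_squared_le_sum_of_squares[of ?pos "{..<?m}"] by simp
  also have "\<dots> \<le> 3 * (\<Sum>p\<in>T. (l (fst p) - l (snd p))\<^sup>2) * real (diameter V E)"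
    using shortest_walk_charge[OF G w balancing_step.finite_T[OF step] dom]
      gdist_le_diameter[OF fin a(1) b(1)]
    by (intro mult_mono) (simp_all add: sum_nonneg)
  also have "(\<Sum>p\<in>T. (l (fst p) - l (snd p))\<^sup>2) = 4 * (\<Sum>p\<in>T. (transfer_amount l p)\<^sup>2)"
    unfolding sum_distrib_left by (intro sum.cong refl) (simp add: transfer_amount_def power_divide)
  finally show ?thesis unfolding K by (simp add: mult.assoc mult.left_commute mult.commute)
qed

section \<open>Convergence and monotonicity\<close>

lemma alg1_round_contracts:
  assumes G: "ugraph V E" and C: "connected_graph V E" and round: "alg1_round V E l T l'"
    and mean: "(\<Sum>u\<in>V. l u) = real (card V) * \<mu>"
  shows "(\<Sum>u\<in>V. (l' u - \<mu>)\<^sup>2)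
          \<le> (1 - 1 / (2 * real (card V) * real (diameter V E) + 1)) * (\<Sum>u\<in>V. (l u - \<mu>)\<^sup>2)"
proof -
  have step: "balancing_step V l l' T" and dom: "transfers_dominate V E l T"
    using alg1_round_properties[OF G round] by blast+
  have "finite V" using G unfolding ugraph_def by blast
  show ?thesis
    using balancing_step.sum_sq_dev_step_le[OF step] discrepancy_sq_le_transfers[OF G C step dom]
      sum_sq_dev_mean_le_discrepancy[OF \<open>finite V\<close> mean]
    by (rule potential_contraction) (simp_all add: sum_nonneg)
qed

lemma alg1_execution_sum_loads:
  assumes G: "ugraph V E" and exec: "alg1_execution V E ls Ts"
  shows "(\<Sum>u\<in>V. ls t u) = (\<Sum>u\<in>V. ls 0 u)"
proof (induction t)
  case (Suc t)
  have "balancing_step V (ls t) (ls (Suc t)) (Ts t)"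
    using alg1_round_properties(1)[OF G] exec unfolding alg1_execution_def by blast
  with Suc show ?case using balancing_step.sum_loads_step by fastforce
qed simp

lemma alg1_convergence:
  assumes G: "ugraph V E" and C: "connected_graph V E" and exec: "alg1_execution V E ls Ts"
    and K0: "discrepancy V (ls 0) > 0" and \<epsilon>: "\<epsilon> > 0"
    and t: "real t \<ge> (2 * real (card V) * real (diameter V E) + 1) *
                ln (real_of_int \<lceil>2 * real (card V) * (discrepancy V (ls 0))\<^sup>2 / \<epsilon>\<^sup>2\<rceil>)"
  shows "discrepancy V (ls t) \<le> \<epsilon>"
proof -
  have fin: "finite V" and ne: "V \<noteq> {}" using G unfolding ugraph_def by blast+
  define n where "n = real (card V)"
  define D where "D = real (diameter V E)"
  define K where "K = discrepancy V (ls 0)"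
  define r where "r = 1 / (2 * n * D + 1)"
  define Y where "Y = 2 * n * K\<^sup>2 / \<epsilon>\<^sup>2"
  define \<mu> where "\<mu> = (\<Sum>u\<in>V. ls 0 u) / n"
  define \<Phi> where "\<Phi> s = (\<Sum>u\<in>V. (ls s u - \<mu>)\<^sup>2)" for s
  have n: "0 < n" unfolding n_def using fin ne by (simp add: card_gt_0_iff)
  have "0 \<le> n * D" using n unfolding D_def by simp
  then have pos: "0 < 2 * n * D + 1" and r: "0 < r" "r \<le> 1"
    unfolding r_def by (simp_all add: mult.commute)
  have Y: "0 < Y" using n K0 \<epsilon> unfolding Y_def K_def by simp
  have mean: "(\<Sum>u\<in>V. ls s u) = real (card V) * \<mu>" for s
    using alg1_execution_sum_loads[OF G exec] n unfolding \<mu>_def n_def by simp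
  have contract: "\<Phi> (Suc s) \<le> (1 - r) * \<Phi> s" for s
    using alg1_round_contracts[OF G C _ mean] exec
    unfolding \<Phi>_def r_def n_def D_def alg1_execution_def by blast
  have decay: "\<Phi> s \<le> (1 - r) ^ s * \<Phi> 0" for s
  proof (induction s)
    case (Suc s)
    have "\<Phi> (Suc s) \<le> (1 - r) * \<Phi> s" by (rule contract)
    also have "\<dots> \<le> (1 - r) * ((1 - r) ^ s * \<Phi> 0)" using Suc r by (intro mult_left_mono) auto
    finally show ?case by (simp add: mult.assoc)
  qed simp
  have "(2 * n * D + 1) * ln (real_of_int \<lceil>Y\<rceil>) \<le> real t"
    using t unfolding n_def D_def Y_def K_def .
  then have "ln (real_of_int \<lceil>Y\<rceil>) \<le> real t / (2 * n * D + 1)"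
    using pos by (simp add: pos_le_divide_eq mult.commute)
  then have "(1 - r) ^ t \<le> 1 / Y"
    by (intro geometric_decay_le[OF r Y]) (simp add: r_def)
  moreover have "0 \<le> \<Phi> 0" "\<Phi> 0 \<le> n * K\<^sup>2 / 4"
    using sum_sq_dev_mean_le_discrepancy[OF fin mean] unfolding \<Phi>_def n_def K_def
    by (simp_all add: sum_nonneg)
  ultimately have bound: "(1 - r) ^ t * \<Phi> 0 \<le> 1 / Y * (n * K\<^sup>2 / 4)"
    using Y by (intro mult_mono) simp_all
  have "(discrepancy V (ls t))\<^sup>2 \<le> 2 * \<Phi> t"
    unfolding \<Phi>_def by (rule discrepancy_sq_le_sum_sq_dev[OF fin ne])
  also have "\<dots> \<le> 2 * (1 / Y * (n * K\<^sup>2 / 4))" using decay[of t] bound by linarith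
  also have "\<dots> = \<epsilon>\<^sup>2 / 4" using n K0 \<epsilon> unfolding Y_def K_def by (simp add: field_simps)
  also have "\<dots> \<le> \<epsilon>\<^sup>2" by simp
  finally have "(discrepancy V (ls t))\<^sup>2 \<le> \<epsilon>\<^sup>2" .
  then show ?thesis by (rule power2_le_imp_le) (use \<epsilon> in simp)
qed

lemma alg1_monotonic:
  assumes G: "ugraph V E"
  shows "alg1_monotonic V E"
  unfolding alg1_monotonic_def
proof (intro allI impI conjI)
  fix ls Ts assume "alg1_execution V E ls Ts"
  then have step: "balancing_step V (ls t) (ls (Suc t)) (Ts t)" for t
    using alg1_round_properties(1)[OF G] unfolding alg1_execution_def by blast
  have ne: "V \<noteq> {}" using G unfolding ugraph_def by blast
  show "\<forall>(w, u)\<in>Ts t. ls t u < ls t w" for t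
    using balancing_step.transfer_downhill[OF step] by blast
  show "Lmax V (ls (Suc t)) \<le> Lmax V (ls t)" for t
    by (rule balancing_step.Lmax_step_le[OF step ne])
  show "Lmin V (ls t) \<le> Lmin V (ls (Suc t))" for t
    by (rule balancing_step.Lmin_step_ge[OF step ne])
qed

theorem theorem1:
  fixes V :: "'a set" and E :: "'a \<Rightarrow> 'a \<Rightarrow> bool"
  assumes "ugraph V E" and "connected_graph V E"
  shows "alg1_monotonic V E \<and>
    (\<forall>ls Ts \<epsilon>. alg1_execution V E ls Ts \<longrightarrow> card V \<ge> 2 \<longrightarrow>
        (\<forall>u\<in>V. ls 0 u \<ge> 0) \<longrightarrow> discrepancy V (ls 0) > 0 \<longrightarrow> \<epsilon> > 0 \<longrightarrow>
        (\<forall>t. real t \<ge> (2 * real (card V) * real (diameter V E) + 1) *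
                ln (real_of_int \<lceil>2 * real (card V) * (discrepancy V (ls 0))\<^sup>2 / \<epsilon>\<^sup>2\<rceil>)
             \<longrightarrow> discrepancy V (ls t) \<le> \<epsilon>))"
  using alg1_monotonic[OF assms(1)] alg1_convergence[OF assms] by blast

end
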